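(* Let $\mathcal{G}$ be an effective ample groupoid. The following are equivalent: (1) $(\llbracket\mathcal{G}\rrbracket,\mathcal{G}^{(0)})$ is locally moving, i.e.\ for every non-empty open $A\subseteq\mathcal{G}^{(0)}$ there is $\gamma\in\llbracket\mathcal{G}\rrbracket\setminus\{1\}$ with $\operatorname{supp}(\gamma)\subseteq A$; (2) every non-empty clopen subset of $\mathcal{G}^{(0)}$ contains two distinct points of some single $\mathcal{G}$-orbit.
   Context: Étale groupoid: topological groupoid whose range map $r(g)=gg^{-1}$ is a local homeomorphism, source $s(g)=g^{-1}g$; ample: étale with $\mathcal{G}^{(0)}$ Hausdorff having a basis of compact open sets; effective: interior of $\{g:s(g)=r(g)\}$ equals $\mathcal{G}^{(0)}$. $\mathcal{G}$-orbit of $x$: $\{r(g):s(g)=x\}$. A full bisection is an open $U$ with $s,r$ injective on $U$ and $s(U)=r(U)=\mathcal{G}^{(0)}$; $\pi_U=r|_U\circ(s|_U)^{-1}$. $\operatorname{supp}(\phi)$ is the closure of the set of points moved by $\phi$. $\llbracket\mathcal{G}\rrbracket$ is the group of all $\pi_U$ for full bisections $U$ with $\operatorname{supp}(\pi_U)$ compact. *)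

theory Defs
  imports "HOL-Analysis.Analysis"
begin

text \<open>A topological groupoid is given by a topology T on the type of arrows
(arrow set = topspace T), a unit space G0, a multiplication m (meaningful on
composable pairs) and an inversion i.\<close>

definition gsrc :: "('g \<Rightarrow> 'g \<Rightarrow> 'g) \<Rightarrow> ('g \<Rightarrow> 'g) \<Rightarrow> 'g \<Rightarrow> 'g" where
  "gsrc m i g = m (i g) g"

definition grng :: "('g \<Rightarrow> 'g \<Rightarrow> 'g) \<Rightarrow> ('g \<Rightarrow> 'g) \<Rightarrow> 'g \<Rightarrow> 'g" where
  "grng m i g = m g (i g)"

definition groupoid :: "'g set \<Rightarrow> 'g set \<Rightarrow> ('g \<Rightarrow> 'g \<Rightarrow> 'g) \<Rightarrow> ('g \<Rightarrow> 'g) \<Rightarrow> bool" where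
  "groupoid G G0 m i \<longleftrightarrow>
     G0 \<subseteq> G \<and>
     (\<forall>g\<in>G. i g \<in> G \<and> i (i g) = g) \<and>
     (\<forall>g\<in>G. gsrc m i g \<in> G0 \<and> grng m i g \<in> G0) \<and>
     (\<forall>x\<in>G0. gsrc m i x = x \<and> grng m i x = x) \<and>
     (\<forall>g\<in>G. m g (gsrc m i g) = g \<and> m (grng m i g) g = g) \<and>
     (\<forall>g\<in>G. \<forall>h\<in>G. gsrc m i g = grng m i h \<longrightarrow>
        m g h \<in> G \<and> gsrc m i (m g h) = gsrc m i h \<and> grng m i (m g h) = grng m i g) \<and>
     (\<forall>g\<in>G. \<forall>h\<in>G. \<forall>k\<in>G. gsrc m i g = grng m i h \<and> gsrc m i h = grng m i k \<longrightarrow>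
        m (m g h) k = m g (m h k))"

definition composable_pairs :: "'g set \<Rightarrow> ('g \<Rightarrow> 'g \<Rightarrow> 'g) \<Rightarrow> ('g \<Rightarrow> 'g) \<Rightarrow> ('g \<times> 'g) set" where
  "composable_pairs G m i = {(g, h). g \<in> G \<and> h \<in> G \<and> gsrc m i g = grng m i h}"

definition topological_groupoid :: "'g topology \<Rightarrow> 'g set \<Rightarrow> ('g \<Rightarrow> 'g \<Rightarrow> 'g) \<Rightarrow> ('g \<Rightarrow> 'g) \<Rightarrow> bool" where
  "topological_groupoid T G0 m i \<longleftrightarrow>
     groupoid (topspace T) G0 m i \<and>
     continuous_map T T i \<and>
     continuous_map (subtopology (prod_topology T T) (composable_pairs (topspace T) m i)) T
        (\<lambda>(g, h). m g h)"

definition local_homeomorphism_map :: "'a topology \<Rightarrow> 'b topology \<Rightarrow> ('a \<Rightarrow> 'b) \<Rightarrow> bool" where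
  "local_homeomorphism_map X Y f \<longleftrightarrow>
     continuous_map X Y f \<and>
     (\<forall>x\<in>topspace X. \<exists>U. openin X U \<and> x \<in> U \<and> openin Y (f ` U) \<and>
        homeomorphic_map (subtopology X U) (subtopology Y (f ` U)) f)"

definition etale_groupoid :: "'g topology \<Rightarrow> 'g set \<Rightarrow> ('g \<Rightarrow> 'g \<Rightarrow> 'g) \<Rightarrow> ('g \<Rightarrow> 'g) \<Rightarrow> bool" where
  "etale_groupoid T G0 m i \<longleftrightarrow>
     topological_groupoid T G0 m i \<and>
     local_homeomorphism_map T (subtopology T G0) (grng m i)"

definition ample_groupoid :: "'g topology \<Rightarrow> 'g set \<Rightarrow> ('g \<Rightarrow> 'g \<Rightarrow> 'g) \<Rightarrow> ('g \<Rightarrow> 'g) \<Rightarrow> bool" where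
  "ample_groupoid T G0 m i \<longleftrightarrow>
     etale_groupoid T G0 m i \<and>
     Hausdorff_space (subtopology T G0) \<and>
     (\<forall>W x. openin (subtopology T G0) W \<and> x \<in> W \<longrightarrow>
        (\<exists>K. openin (subtopology T G0) K \<and> compactin (subtopology T G0) K \<and> x \<in> K \<and> K \<subseteq> W))"

definition effective_groupoid :: "'g topology \<Rightarrow> 'g set \<Rightarrow> ('g \<Rightarrow> 'g \<Rightarrow> 'g) \<Rightarrow> ('g \<Rightarrow> 'g) \<Rightarrow> bool" where
  "effective_groupoid T G0 m i \<longleftrightarrow>
     T interior_of {g \<in> topspace T. gsrc m i g = grng m i g} = G0"

definition gorbit :: "'g topology \<Rightarrow> ('g \<Rightarrow> 'g \<Rightarrow> 'g) \<Rightarrow> ('g \<Rightarrow> 'g) \<Rightarrow> 'g \<Rightarrow> 'g set" where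
  "gorbit T m i x = {grng m i g | g. g \<in> topspace T \<and> gsrc m i g = x}"

definition full_bisection :: "'g topology \<Rightarrow> 'g set \<Rightarrow> ('g \<Rightarrow> 'g \<Rightarrow> 'g) \<Rightarrow> ('g \<Rightarrow> 'g) \<Rightarrow> 'g set \<Rightarrow> bool" where
  "full_bisection T G0 m i U \<longleftrightarrow>
     openin T U \<and> inj_on (gsrc m i) U \<and> inj_on (grng m i) U \<and>
     gsrc m i ` U = G0 \<and> grng m i ` U = G0"

text \<open>pi_U = r|_U o (s|_U)^-1 on G0; extended by the identity outside G0 so that
the identity homeomorphism of G0 is represented by id.\<close>
definition bisection_map :: "('g \<Rightarrow> 'g \<Rightarrow> 'g) \<Rightarrow> ('g \<Rightarrow> 'g) \<Rightarrow> 'g set \<Rightarrow> 'g set \<Rightarrow> 'g \<Rightarrow> 'g" where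
  "bisection_map m i G0 U x = (if x \<in> G0 then grng m i (inv_into U (gsrc m i) x) else x)"

definition supp_map :: "'a topology \<Rightarrow> ('a \<Rightarrow> 'a) \<Rightarrow> 'a set" where
  "supp_map X \<phi> = X closure_of {x \<in> topspace X. \<phi> x \<noteq> x}"

definition topological_full_group :: "'g topology \<Rightarrow> 'g set \<Rightarrow> ('g \<Rightarrow> 'g \<Rightarrow> 'g) \<Rightarrow> ('g \<Rightarrow> 'g) \<Rightarrow> ('g \<Rightarrow> 'g) set" where
  "topological_full_group T G0 m i =
     {bisection_map m i G0 U | U. full_bisection T G0 m i U \<and>
        compactin (subtopology T G0) (supp_map (subtopology T G0) (bisection_map m i G0 U))}"

definition locally_moving :: "'a topology \<Rightarrow> ('a \<Rightarrow> 'a) set \<Rightarrow> bool" where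
  "locally_moving X \<Gamma> \<longleftrightarrow>
     (\<forall>A. openin X A \<and> A \<noteq> {} \<longrightarrow> (\<exists>\<gamma>\<in>\<Gamma>. \<gamma> \<noteq> id \<and> supp_map X \<gamma> \<subseteq> A))"

end

theory Submission
  imports Defs
begin

text \<open>
A non-trivial \<gamma> in the topological full group moves some unit x to y = \<gamma> x, which lies in the
orbit of x and, \<gamma> being injective, is moved as well; so x and y both lie in the support of \<gamma>.
Conversely, inside a non-empty open A choose a compact open K and, by hypothesis, an arrow g
from x to y \<noteq> x with x, y \<in> K. As source and range are local homeomorphisms and the unit space
has a basis of compact open sets, g lies in a compact open bisection B whose source D and range
E are disjoint subsets of K. Then B \<union> i ` B \<union> (G0 - (D \<union> E)) is a full bisection whose map
swaps D and E and fixes everything else: a non-trivial element of the full group supported in K.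
\<close>

lemma effective_groupoid_imp_openin_units:
  "effective_groupoid T G0 m i \<Longrightarrow> openin T G0"
  unfolding effective_groupoid_def by (metis openin_interior_of)

lemma openin_image_local_homeomorphism:
  assumes "homeomorphic_map (subtopology X U) (subtopology Y (f ` U)) f" "openin Y (f ` U)"
    and "openin X W" "W \<subseteq> U"
  shows "openin Y (f ` W)"
proof -
  have "openin (subtopology X U) W"
    using assms(3,4) unfolding openin_subtopology by (metis Int_absorb2)
  then have "openin (subtopology Y (f ` U)) (f ` W)"
    using assms(1) homeomorphic_imp_open_map open_map_def by blast
  then show ?thesis
    using assms(2) openin_trans_full by blast
qed

lemma inj_on_Un_disjoint_images:
  "inj_on f A \<Longrightarrow> inj_on f B \<Longrightarrow> f ` A \<inter> f ` B = {} \<Longrightarrow> inj_on f (A \<union> B)"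
  by (auto simp: inj_on_Un)

lemma moved_point_in_supp_map:
  "x \<in> topspace X \<Longrightarrow> \<phi> x \<noteq> x \<Longrightarrow> x \<in> supp_map X \<phi>"
  unfolding supp_map_def by (auto intro: closure_of_subset[THEN subsetD])

locale ample_groupoid_open_units =
  fixes T :: "'g topology" and G0 :: "'g set" and m :: "'g \<Rightarrow> 'g \<Rightarrow> 'g" and i :: "'g \<Rightarrow> 'g"
  assumes ample: "ample_groupoid T G0 m i" and openin_units: "openin T G0"
begin

abbreviation "X \<equiv> subtopology T G0"
abbreviation "src \<equiv> gsrc m i"
abbreviation "rng \<equiv> grng m i"

lemma groupoid: "groupoid (topspace T) G0 m i"
  using ample unfolding ample_groupoid_def etale_groupoid_def topological_groupoid_def by blast

lemma units_subset: "G0 \<subseteq> topspace T"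
  using groupoid unfolding groupoid_def by blast

lemma topspace_X: "topspace X = G0"
  using units_subset by auto

lemma inv_in: "g \<in> topspace T \<Longrightarrow> i g \<in> topspace T"
  using groupoid unfolding groupoid_def by blast

lemma inv_inv: "g \<in> topspace T \<Longrightarrow> i (i g) = g"
  using groupoid unfolding groupoid_def by blast

lemma src_in_units: "g \<in> topspace T \<Longrightarrow> src g \<in> G0"
  using groupoid unfolding groupoid_def by blast

lemma rng_in_units: "g \<in> topspace T \<Longrightarrow> rng g \<in> G0"
  using groupoid unfolding groupoid_def by blast

lemma src_unit: "x \<in> G0 \<Longrightarrow> src x = x"
  using groupoid unfolding groupoid_def by blast

lemma rng_unit: "x \<in> G0 \<Longrightarrow> rng x = x"
  using groupoid unfolding groupoid_def by blast

lemma src_inv: "g \<in> topspace T \<Longrightarrow> src (i g) = rng g"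
  by (simp add: gsrc_def grng_def inv_inv)

lemma rng_inv: "g \<in> topspace T \<Longrightarrow> rng (i g) = src g"
  by (simp add: gsrc_def grng_def inv_inv)

lemma openin_X_iff: "openin X W \<longleftrightarrow> openin T W \<and> W \<subseteq> G0"
  by (rule openin_open_subtopology[OF openin_units])

lemma Hausdorff_X: "Hausdorff_space X"
  using ample unfolding ample_groupoid_def by blast

lemma compact_open_basis:
  "openin X W \<Longrightarrow> x \<in> W \<Longrightarrow> \<exists>K. openin X K \<and> compactin X K \<and> x \<in> K \<and> K \<subseteq> W"
  using ample unfolding ample_groupoid_def by blast

lemma continuous_map_inv: "continuous_map T T i"
  using ample unfolding ample_groupoid_def etale_groupoid_def topological_groupoid_def by blast

lemma homeomorphic_map_inv: "homeomorphic_map T T i"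
  unfolding homeomorphic_map_maps homeomorphic_maps_def
  using continuous_map_inv inv_inv by blast

lemma continuous_map_rng: "continuous_map T X rng"
  using ample unfolding ample_groupoid_def etale_groupoid_def local_homeomorphism_map_def by blast

lemma continuous_map_src: "continuous_map T X src"
  using continuous_map_compose[OF continuous_map_inv continuous_map_rng]
  by (rule continuous_map_eq) (simp add: rng_inv)

lemma inv_image_eq_preimage:
  "B \<subseteq> topspace T \<Longrightarrow> i ` B = {h \<in> topspace T. i h \<in> B}"
  using inv_in inv_inv by (auto intro!: image_eqI)

lemma openin_inv_image: "openin T B \<Longrightarrow> openin T (i ` B)"
  using inv_image_eq_preimage[OF openin_subset]
  by (metis openin_continuous_map_preimage[OF continuous_map_inv])

lemma src_local_homeomorphism:
  assumes g: "g \<in> topspace T"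
  obtains U where "openin T U" "g \<in> U" "openin X (src ` U)"
    "homeomorphic_map (subtopology T U) (subtopology X (src ` U)) src"
proof -
  obtain V where V: "openin T V" "i g \<in> V" "openin X (rng ` V)"
    "homeomorphic_map (subtopology T V) (subtopology X (rng ` V)) rng"
    using ample inv_in[OF g]
    unfolding ample_groupoid_def etale_groupoid_def local_homeomorphism_map_def by blast
  define U where "U = i ` V"
  have VT: "V \<subseteq> topspace T"
    using V(1) openin_subset by blast
  have UT: "U \<subseteq> topspace T" and iU: "i ` U = V"
    unfolding U_def using VT inv_in inv_inv by (force simp: image_image)+
  have src_U: "src ` U = rng ` V"
    unfolding U_def image_image using VT by (auto simp: src_inv intro!: image_eqI)
  have "homeomorphic_map (subtopology T U) (subtopology T V) i"
    using homeomorphic_map_inv iU UT VT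
    by (intro homeomorphic_map_subtopologies) (simp_all add: Int_absorb1)
  then have "homeomorphic_map (subtopology T U) (subtopology X (src ` U)) (rng \<circ> i)"
    using homeomorphic_map_compose V(4) src_U by metis
  then have "homeomorphic_map (subtopology T U) (subtopology X (src ` U)) src"
    by (rule homeomorphic_map_eq) (use UT rng_inv in auto)
  moreover have "openin T U" "g \<in> U"
    unfolding U_def using V(1,2) inv_inv[OF g] by (auto simp: openin_inv_image intro: rev_image_eqI)
  ultimately show ?thesis
    using that V(3) src_U by auto
qed

lemma rng_local_homeomorphism:
  assumes "g \<in> topspace T"
  obtains U where "openin T U" "g \<in> U" "openin X (rng ` U)"
    "homeomorphic_map (subtopology T U) (subtopology X (rng ` U)) rng"
  using assms ample that
  unfolding ample_groupoid_def etale_groupoid_def local_homeomorphism_map_def by blast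

lemma bisection_map_src:
  assumes U: "full_bisection T G0 m i U" and g: "g \<in> U"
  shows "bisection_map m i G0 U (src g) = rng g"
proof -
  have "src g \<in> G0" "inv_into U src (src g) = g"
    using U g unfolding full_bisection_def by auto
  then show ?thesis
    by (simp add: bisection_map_def)
qed

lemma moved_point_of_bisection_map:
  assumes U: "full_bisection T G0 m i U" and moved: "bisection_map m i G0 U x \<noteq> x"
  obtains y where "x \<in> G0" "y \<in> G0" "y \<noteq> x" "y \<in> gorbit T m i x"
    "bisection_map m i G0 U y \<noteq> y"
proof -
  have U_props: "openin T U" "inj_on rng U" "src ` U = G0" "rng ` U = G0"
    using U unfolding full_bisection_def by auto
  have x: "x \<in> G0"
    using moved unfolding bisection_map_def by (auto split: if_splits)
  then obtain g where g: "g \<in> U" "src g = x"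
    using U_props(3) by auto
  have gT: "g \<in> topspace T"
    using g(1) U_props(1) openin_subset by blast
  define y where "y = rng g"
  have y: "y \<in> G0" "y \<noteq> x"
    using g moved bisection_map_src[OF U g(1)] U_props(4) unfolding y_def by auto
  then obtain h where h: "h \<in> U" "src h = y"
    using U_props(3) by auto
  have "bisection_map m i G0 U y \<noteq> y"
  proof
    assume "bisection_map m i G0 U y = y"
    then have "rng h = rng g"
      using bisection_map_src[OF U h(1)] h(2) y_def by simp
    then have "h = g"
      using U_props(2) g(1) h(1) by (auto dest: inj_onD)
    then show False
      using g(2) h(2) y(2) by simp
  qed
  moreover have "y \<in> gorbit T m i x"
    unfolding gorbit_def y_def using gT g(2) by blast
  ultimately show ?thesis
    using that x y by blast
qed

lemma orbit_pair_in_open_if_locally_moving: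
  assumes "locally_moving X (topological_full_group T G0 m i)"
    and "openin X A" "A \<noteq> {}"
  shows "\<exists>x\<in>A. \<exists>y\<in>A. x \<noteq> y \<and> y \<in> gorbit T m i x"
proof -
  obtain U where U: "full_bisection T G0 m i U"
    and nontrivial: "bisection_map m i G0 U \<noteq> id"
    and supp: "supp_map X (bisection_map m i G0 U) \<subseteq> A"
    using assms unfolding locally_moving_def topological_full_group_def by blast
  obtain x where moved: "bisection_map m i G0 U x \<noteq> x"
    using nontrivial by (metis eq_id_iff)
  then obtain y where xy: "x \<in> G0" "y \<in> G0" "y \<noteq> x" "y \<in> gorbit T m i x"
    "bisection_map m i G0 U y \<noteq> y"
    using moved_point_of_bisection_map[OF U] by blast
  have "x \<in> supp_map X (bisection_map m i G0 U)" "y \<in> supp_map X (bisection_map m i G0 U)"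
    using moved xy(1,2,5) topspace_X by (simp_all add: moved_point_in_supp_map)
  then have "x \<in> A" "y \<in> A"
    using supp by (auto simp only: subset_iff)
  with xy(3,4) show ?thesis
    by metis
qed

lemma compact_open_bisection_around:
  assumes g: "g \<in> topspace T"
    and Ox: "openin X Ox" "src g \<in> Ox" and Oy: "openin X Oy" "rng g \<in> Oy"
  obtains B where "openin T B" "inj_on src B" "inj_on rng B" "src g \<in> src ` B"
    "src ` B \<subseteq> Ox" "rng ` B \<subseteq> Oy" "compactin X (src ` B)" "compactin X (rng ` B)"
proof -
  obtain Us where Us: "openin T Us" "g \<in> Us" "openin X (src ` Us)"
    "homeomorphic_map (subtopology T Us) (subtopology X (src ` Us)) src"
    using src_local_homeomorphism[OF g] by blast
  obtain Ur where Ur: "openin T Ur" "g \<in> Ur" "openin X (rng ` Ur)"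
    "homeomorphic_map (subtopology T Ur) (subtopology X (rng ` Ur)) rng"
    using rng_local_homeomorphism[OF g] by blast
  define W where "W = Us \<inter> Ur \<inter> {h \<in> topspace T. src h \<in> Ox} \<inter> {h \<in> topspace T. rng h \<in> Oy}"
  have "openin T W"
    unfolding W_def
    by (intro openin_Int Us(1) Ur(1) Ox(1) Oy(1) openin_continuous_map_preimage[OF continuous_map_src]
        openin_continuous_map_preimage[OF continuous_map_rng])
  moreover have "g \<in> W" "W \<subseteq> Us" "W \<subseteq> Ur" "W \<subseteq> topspace T"
    unfolding W_def using g Us(2) Ur(2) Ox(2) Oy(2) by auto
  ultimately have W: "openin T W" "g \<in> W" "W \<subseteq> Us" "W \<subseteq> Ur" "W \<subseteq> topspace T" .
  have "openin X (src ` W)"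
    using openin_image_local_homeomorphism[OF Us(4,3) W(1,3)] .
  then obtain D where D: "openin X D" "compactin X D" "src g \<in> D" "D \<subseteq> src ` W"
    using compact_open_basis W(2) by blast
  define B where "B = {h \<in> W. src h \<in> D}"
  have B: "B \<subseteq> W" "src ` B = D"
    unfolding B_def using D(4) by auto
  have "B = W \<inter> {h \<in> topspace T. src h \<in> D}"
    unfolding B_def using W(5) by blast
  then have "openin T B"
    using W(1) D(1) by (metis openin_Int openin_continuous_map_preimage[OF continuous_map_src])
  moreover have "inj_on src B" "inj_on rng B"
  proof -
    have "B \<subseteq> topspace T \<inter> Us" "B \<subseteq> topspace T \<inter> Ur"
      using B(1) W(3,4,5) by auto
    then show "inj_on src B" "inj_on rng B"
      using homeomorphic_imp_injective_map[OF Us(4)] homeomorphic_imp_injective_map[OF Ur(4)]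
      by (auto intro: inj_on_subset)
  qed
  moreover have "compactin X (rng ` B)"
  proof -
    have "compactin (subtopology X (src ` Us)) (src ` B)"
      using B D(2) W(3) by (auto simp: compactin_subtopology)
    then have "compactin T B"
      using homeomorphic_map_compactness[OF Us(4), of B] B(1) W(3,5)
      by (auto simp: compactin_subtopology)
    then show ?thesis
      by (rule image_compactin[OF _ continuous_map_rng])
  qed
  moreover have "src ` B \<subseteq> Ox" "rng ` B \<subseteq> Oy"
    using B(1) unfolding W_def by auto
  ultimately show ?thesis
    using that B(2) D(2,3) by blast
qed

lemma full_bisection_swap:
  assumes B: "openin T B" "inj_on src B" "inj_on rng B"
    and closed: "closedin X (src ` B)" "closedin X (rng ` B)"
    and disjoint: "src ` B \<inter> rng ` B = {}"
  shows "full_bisection T G0 m i (B \<union> i ` B \<union> (G0 - (src ` B \<union> rng ` B)))"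
proof -
  define D E R where "D = src ` B" and "E = rng ` B" and "R = G0 - (D \<union> E)"
  have BT: "B \<subseteq> topspace T"
    using B(1) openin_subset by blast
  have DE: "D \<subseteq> G0" "E \<subseteq> G0"
    unfolding D_def E_def using BT src_in_units rng_in_units by auto
  have images: "src ` i ` B = E" "rng ` i ` B = D" "src ` R = R" "rng ` R = R"
    unfolding D_def E_def R_def image_image using BT
    by (auto simp: src_inv rng_inv src_unit rng_unit intro!: image_eqI)
  have "openin X R"
    unfolding R_def D_def E_def using closed topspace_X by (metis closedin_Un openin_diff openin_topspace)
  then have "openin T (B \<union> i ` B \<union> R)"
    using B(1) openin_inv_image openin_X_iff by blast
  moreover have "inj_on src (B \<union> i ` B \<union> R)" "inj_on rng (B \<union> i ` B \<union> R)"
  proof -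
    have "inj_on (src \<circ> i) B" "inj_on (rng \<circ> i) B"
      using B(3,2) BT by (simp_all add: inj_on_def src_inv rng_inv subset_iff)
    then have "inj_on src (i ` B)" "inj_on rng (i ` B)"
      by (simp_all add: inj_on_imageI)
    moreover have "inj_on src R" "inj_on rng R"
      unfolding R_def by (auto intro!: inj_onI simp: src_unit rng_unit)
    moreover have "src ` (B \<union> i ` B) \<inter> src ` R = {}" "rng ` (B \<union> i ` B) \<inter> rng ` R = {}"
      using images unfolding D_def E_def R_def by auto
    ultimately show "inj_on src (B \<union> i ` B \<union> R)" "inj_on rng (B \<union> i ` B \<union> R)"
      using B(2,3) disjoint images unfolding D_def E_def
      by (simp_all add: inj_on_Un_disjoint_images Int_commute)
  qed
  moreover have "src ` (B \<union> i ` B \<union> R) = G0" "rng ` (B \<union> i ` B \<union> R) = G0"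
    unfolding image_Un images D_def[symmetric] E_def[symmetric] using DE R_def by auto
  ultimately show ?thesis
    unfolding full_bisection_def D_def E_def R_def by blast
qed

lemma full_group_element_swapping:
  assumes B: "openin T B" "inj_on src B" "inj_on rng B" "B \<noteq> {}"
    and compact: "compactin X (src ` B)" "compactin X (rng ` B)"
    and disjoint: "src ` B \<inter> rng ` B = {}"
  obtains \<gamma> where "\<gamma> \<in> topological_full_group T G0 m i" "\<gamma> \<noteq> id"
    "supp_map X \<gamma> \<subseteq> src ` B \<union> rng ` B"
proof -
  define V where "V = B \<union> i ` B \<union> (G0 - (src ` B \<union> rng ` B))"
  define \<gamma> where "\<gamma> = bisection_map m i G0 V"
  have closed: "closedin X (src ` B)" "closedin X (rng ` B)"
    using compact Hausdorff_X by (simp_all add: compactin_imp_closedin)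
  have V: "full_bisection T G0 m i V"
    unfolding V_def using full_bisection_swap[OF B(1-3) closed disjoint] .
  obtain b where b: "b \<in> B"
    using B(4) by blast
  then have "\<gamma> (src b) = rng b"
    unfolding \<gamma>_def using bisection_map_src[OF V] V_def by blast
  then have "\<gamma> \<noteq> id"
    using b disjoint by auto
  have "\<gamma> x = x" if "x \<in> G0" "x \<notin> src ` B \<union> rng ` B" for x
    using bisection_map_src[OF V, of x] that src_unit rng_unit unfolding \<gamma>_def V_def by auto
  then have "{x \<in> topspace X. \<gamma> x \<noteq> x} \<subseteq> src ` B \<union> rng ` B"
    using topspace_X by blast
  then have supp: "supp_map X \<gamma> \<subseteq> src ` B \<union> rng ` B"
    unfolding supp_map_def by (rule closure_of_minimal[OF _ closedin_Un[OF closed]])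
  then have "compactin X (supp_map X \<gamma>)"
    by (rule closed_compactin[OF compactin_Un[OF compact]]) (simp add: supp_map_def)
  then have "\<gamma> \<in> topological_full_group T G0 m i"
    unfolding topological_full_group_def \<gamma>_def using V by blast
  with \<open>\<gamma> \<noteq> id\<close> supp show ?thesis
    using that by blast
qed

lemma locally_moving_if_clopens_contain_orbit_pairs:
  assumes orbit_pairs: "\<And>C. closedin X C \<Longrightarrow> openin X C \<Longrightarrow> C \<noteq> {} \<Longrightarrow>
    \<exists>x\<in>C. \<exists>y\<in>C. x \<noteq> y \<and> y \<in> gorbit T m i x"
  shows "locally_moving X (topological_full_group T G0 m i)"
  unfolding locally_moving_def
proof (intro allI impI)
  fix A assume A: "openin X A \<and> A \<noteq> {}"
  then obtain K where K: "openin X K" "compactin X K" "K \<noteq> {}" "K \<subseteq> A"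
    using compact_open_basis by blast
  then have "closedin X K"
    using Hausdorff_X by (simp add: compactin_imp_closedin)
  then obtain x y where xy: "x \<in> K" "y \<in> K" "x \<noteq> y" "y \<in> gorbit T m i x"
    using orbit_pairs K(1,3) by blast
  then obtain g where g: "g \<in> topspace T" "src g = x" "rng g = y"
    unfolding gorbit_def by blast
  have "x \<in> topspace X" "y \<in> topspace X"
    using xy(1,2) openin_subset[OF K(1)] by blast+
  then obtain Ox Oy where O: "openin X Ox" "openin X Oy" "x \<in> Ox" "y \<in> Oy" "disjnt Ox Oy"
    using Hausdorff_X xy(3) unfolding Hausdorff_space_def by blast
  obtain B where B: "openin T B" "inj_on src B" "inj_on rng B" "x \<in> src ` B"
    "src ` B \<subseteq> Ox \<inter> K" "rng ` B \<subseteq> Oy \<inter> K" "compactin X (src ` B)" "compactin X (rng ` B)"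
    using compact_open_bisection_around[of g "Ox \<inter> K" "Oy \<inter> K"] g O K(1) xy(1,2) by blast
  have "src ` B \<inter> rng ` B = {}"
    using B(5,6) O(5) unfolding disjnt_def by blast
  then obtain \<gamma> where "\<gamma> \<in> topological_full_group T G0 m i" "\<gamma> \<noteq> id"
    "supp_map X \<gamma> \<subseteq> src ` B \<union> rng ` B"
    using full_group_element_swapping[OF B(1-3) _ B(7,8)] B(4) by blast
  then show "\<exists>\<gamma>\<in>topological_full_group T G0 m i. \<gamma> \<noteq> id \<and> supp_map X \<gamma> \<subseteq> A"
    using B(5,6) K(4) by blast
qed

end

theorem proposition7p7:
  fixes T :: "'g topology" and G0 :: "'g set"
    and m :: "'g \<Rightarrow> 'g \<Rightarrow> 'g" and i :: "'g \<Rightarrow> 'g"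
  assumes "ample_groupoid T G0 m i" and "effective_groupoid T G0 m i"
  shows "locally_moving (subtopology T G0) (topological_full_group T G0 m i) \<longleftrightarrow>
    (\<forall>C. closedin (subtopology T G0) C \<and> openin (subtopology T G0) C \<and> C \<noteq> {} \<longrightarrow>
       (\<exists>x\<in>C. \<exists>y\<in>C. x \<noteq> y \<and> y \<in> gorbit T m i x))"
proof -
  interpret ample_groupoid_open_units T G0 m i
    using assms(1) effective_groupoid_imp_openin_units[OF assms(2)]
    by (rule ample_groupoid_open_units.intro)
  show ?thesis
  proof
    assume "locally_moving X (topological_full_group T G0 m i)"
    then show "\<forall>C. closedin X C \<and> openin X C \<and> C \<noteq> {} \<longrightarrow>
       (\<exists>x\<in>C. \<exists>y\<in>C. x \<noteq> y \<and> y \<in> gorbit T m i x)"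
      by (simp add: orbit_pair_in_open_if_locally_moving)
  next
    assume orbit_pairs: "\<forall>C. closedin X C \<and> openin X C \<and> C \<noteq> {} \<longrightarrow>
       (\<exists>x\<in>C. \<exists>y\<in>C. x \<noteq> y \<and> y \<in> gorbit T m i x)"
    show "locally_moving X (topological_full_group T G0 m i)"
      by (rule locally_moving_if_clopens_contain_orbit_pairs) (use orbit_pairs in simp)
  qed
qed

end
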